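(* Let $G\le\mathrm{O}(d)$ be finite and let $z_1,\ldots,z_n\in\mathbb{R}^d$. Then the max filter bank $\Phi:\mathbb{R}^d/G\to\mathbb{R}^n$, $\Phi([x])=(\langle\!\langle[z_i],[x]\rangle\!\rangle)_{i=1}^n$, satisfies $$\sup_{\substack{[x],[y]\in\mathbb{R}^d/G\\ [x]\ne[y]}}\frac{\|\Phi([x])-\Phi([y])\|}{d([x],[y])}=\max\Big\{\big\|[\,g_1z_1\ \cdots\ g_nz_n\,]\big\|_{2\to2}\;:\;g_1,\ldots,g_n\in G,\ \textstyle\bigcap_{i=1}^n V_{g_iz_i}\ne\varnothing\Big\},$$ where $[\,g_1z_1\ \cdots\ g_nz_n\,]$ is the $d\times n$ matrix with columns $g_iz_i$.
   Context: For $x\in\mathbb{R}^d$, $[x]:=\{gx:g\in G\}$; $\mathbb{R}^d/G$ is the set of orbits with quotient metric $d([x],[y]):=\min_{p\in[x],q\in[y]}\|p-q\|$. Max filtering: $\langle\!\langle[x],[y]\rangle\!\rangle:=\max_{p\in[x],q\in[y]}\langle p,q\rangle$. The open Voronoi cell $V_x$ of $x$ is the set of $y\in\mathbb{R}^d$ such that $x$ is the unique maximizer of $\langle p,y\rangle$ over $p\in[x]$. $\|A\|_{2\to2}$ denotes the operator (spectral) norm. *)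

theory Defs
  imports "HOL-Analysis.Analysis"
begin

definition finite_orth_group :: "(real^'d^'d) set \<Rightarrow> bool" where
  "finite_orth_group G \<longleftrightarrow> finite G \<and> mat 1 \<in> G \<and>
     (\<forall>g\<in>G. orthogonal_matrix g) \<and>
     (\<forall>g\<in>G. \<forall>h\<in>G. g ** h \<in> G) \<and> (\<forall>g\<in>G. matrix_inv g \<in> G)"

definition orbit :: "(real^'d^'d) set \<Rightarrow> real^'d \<Rightarrow> (real^'d) set" where
  "orbit G x = (\<lambda>g. g *v x) ` G"

definition qdist :: "(real^'d^'d) set \<Rightarrow> real^'d \<Rightarrow> real^'d \<Rightarrow> real" where
  "qdist G x y = Min {dist p q | p q. p \<in> orbit G x \<and> q \<in> orbit G y}"

definition maxfilt :: "(real^'d^'d) set \<Rightarrow> real^'d \<Rightarrow> real^'d \<Rightarrow> real" where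
  "maxfilt G x y = Max {p \<bullet> q | p q. p \<in> orbit G x \<and> q \<in> orbit G y}"

definition voronoi :: "(real^'d^'d) set \<Rightarrow> real^'d \<Rightarrow> (real^'d) set" where
  "voronoi G x = {y. \<forall>p\<in>orbit G x. p \<noteq> x \<longrightarrow> p \<bullet> y < x \<bullet> y}"

definition maxfilter_bank :: "(real^'d^'d) set \<Rightarrow> ('n \<Rightarrow> real^'d) \<Rightarrow> real^'d \<Rightarrow> real^'n" where
  "maxfilter_bank G z x = (\<chi> i. maxfilt G (z i) x)"

definition col_matrix :: "('n \<Rightarrow> real^'d) \<Rightarrow> real^'n^'d" where
  "col_matrix c = (\<chi> r j. c j $ r)"

end

theory Submission
  imports Defs
begin

text \<open>On a common Voronoi region \<open>\<Inter>i. V\<^bsub>g\<^sub>i z\<^sub>i\<^esub>\<close> the filter bank is the linear map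
  \<open>x \<mapsto> (\<langle>g\<^sub>i z\<^sub>i, x\<rangle>)\<^sub>i\<close>, the transpose of \<open>[g\<^sub>1 z\<^sub>1 \<cdots> g\<^sub>n z\<^sub>n]\<close>, which has the same
  operator norm. Off finitely many hyperplanes every point lies in such an open region, so on a
  generic segment the bank is piecewise linear with finitely many breaks and integrating its
  derivative bounds its Lipschitz constant by the largest of these norms; continuity extends the
  bound to all pairs and \<open>G\<close>-invariance transfers it to the quotient metric. Conversely, a short
  step inside a region attaining the maximum, in a direction where the transpose nearly attains
  its norm, leaves the orbit of the starting point, and \<open>d([x],[y]) \<le> \<parallel>x - y\<parallel>\<close> makes the
  ratio at least that of the linear map.\<close>

section \<open>Linear algebra and analysis\<close>

lemma inner_matrix_vector_mult:
  fixes A :: "real^'n^'m"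
  shows "(A *v x) \<bullet> y = x \<bullet> (transpose A *v y)"
  by (metis dot_lmul_matrix vector_transpose_matrix)

lemma onorm_transpose_le:
  fixes A :: "real^'n^'m"
  shows "onorm (\<lambda>v. transpose A *v v) \<le> onorm (\<lambda>v. A *v v)"
proof (rule onorm_bound)
  show L0: "0 \<le> onorm (\<lambda>v. A *v v)" by (simp add: onorm_pos_le)
  fix h
  let ?w = "transpose A *v h"
  have "norm ?w ^ 2 = (A *v ?w) \<bullet> h"
    using inner_matrix_vector_mult[of A ?w h] by (simp add: power2_norm_eq_inner inner_commute)
  also have "\<dots> = h \<bullet> (A *v ?w)"
    by (rule inner_commute)
  also have "\<dots> \<le> norm h * (onorm (\<lambda>v. A *v v) * norm ?w)"
    by (intro order_trans[OF norm_cauchy_schwarz] mult_left_mono onorm) simp_all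
  finally show "norm ?w \<le> onorm (\<lambda>v. A *v v) * norm h"
    using L0 by (cases "?w = 0") (simp_all add: power2_eq_square mult_ac)
qed

lemma onorm_transpose:
  fixes A :: "real^'n^'m"
  shows "onorm (\<lambda>v. transpose A *v v) = onorm (\<lambda>v. A *v v)"
  using onorm_transpose_le[of A] onorm_transpose_le[of "transpose A"] by simp

lemma exists_norm_gt_of_less_onorm:
  fixes f :: "'a::{real_normed_vector, perfect_space} \<Rightarrow> 'b::real_normed_vector"
  assumes "b < onorm f"
  obtains x where "b * norm x < norm (f x)"
proof (rule ccontr)
  assume "\<not> thesis"
  then have le: "norm (f x) \<le> b * norm x" for x
    using that by (meson not_le)
  show False
  proof (cases "0 \<le> b")
    case True
    then show False
      using onorm_bound[OF True le] assms by simp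
  next
    case False
    obtain x :: 'a where "norm x = 1"
      using vector_choose_size[of 1] by auto
    then show False
      using False le[of x] norm_ge_zero[of "f x"] by simp
  qed
qed

lemma matrix_inv_orthogonal:
  fixes k :: "real^'n^'n"
  assumes "orthogonal_matrix k"
  shows "matrix_inv k = transpose k"
  unfolding matrix_inv_def
proof (rule some_equality)
  show "k ** transpose k = mat 1 \<and> transpose k ** k = mat 1"
    using assms by (simp add: orthogonal_matrix_def)
next
  fix A assume "k ** A = mat 1 \<and> A ** k = mat 1"
  then have "k ** A = mat 1" by simp
  have "A = (transpose k ** k) ** A"
    using assms by (simp add: orthogonal_matrix_def)
  also have "\<dots> = transpose k"
    using \<open>k ** A = mat 1\<close> by (simp flip: matrix_mul_assoc)
  finally show "A = transpose k" .
qed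

lemma norm_orthogonal_matrix_mult:
  fixes k :: "real^'n^'n"
  assumes "orthogonal_matrix k"
  shows "norm (k *v x) = norm x"
  using assms orthogonal_transformation_matrix[of "(*v) k"]
  by (simp add: orthogonal_transformation_norm)

lemma closure_complement_negligible:
  fixes S :: "'a::euclidean_space set"
  assumes "negligible S"
  shows "closure (- S) = UNIV"
proof -
  have "negligible (interior S)"
    using assms interior_subset negligible_subset by blast
  then have "interior S = {}"
    using open_not_negligible by blast
  then show ?thesis by (simp add: closure_complement)
qed

lemma finite_line_hyperplane_hits:
  fixes x v :: "'a::real_inner"
  assumes "finite A" "\<forall>a\<in>A. a \<bullet> x \<noteq> 0"
  shows "finite {t. \<exists>a\<in>A. a \<bullet> (x + t *\<^sub>R v) = 0}"
proof (rule finite_subset)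
  show "{t. \<exists>a\<in>A. a \<bullet> (x + t *\<^sub>R v) = 0} \<subseteq> (\<lambda>a. - (a \<bullet> x) / (a \<bullet> v)) ` A"
  proof clarify
    fix t a assume a: "a \<in> A" "a \<bullet> (x + t *\<^sub>R v) = 0"
    then have "a \<bullet> x + t * (a \<bullet> v) = 0"
      by (simp add: inner_add_right)
    moreover have "a \<bullet> x \<noteq> 0"
      using assms(2) a(1) by blast
    ultimately have "a \<bullet> v \<noteq> 0"
      by auto
    with \<open>a \<bullet> x + t * (a \<bullet> v) = 0\<close> have "t = - (a \<bullet> x) / (a \<bullet> v)"
      by (auto simp: field_simps)
    then show "t \<in> (\<lambda>a. - (a \<bullet> x) / (a \<bullet> v)) ` A"
      using a(1) by blast
  qed
qed (simp add: assms(1))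

lemma norm_diff_le_of_vector_derivative_bound_off_finite:
  fixes f :: "real \<Rightarrow> 'a::banach"
  assumes "a \<le> b" "finite T" "0 \<le> B" and cont: "continuous_on {a..b} f"
    and deriv: "\<And>t. t \<in> {a<..<b} - T \<Longrightarrow>
      \<exists>D. (f has_vector_derivative D) (at t) \<and> norm D \<le> B"
  shows "norm (f b - f a) \<le> B * (b - a)"
proof -
  obtain f' where f': "\<And>t. t \<in> {a<..<b} - T \<Longrightarrow>
      (f has_vector_derivative f' t) (at t) \<and> norm (f' t) \<le> B"
    using deriv by metis
  have "(f' has_integral (f b - f a)) (cbox a b)"
    using fundamental_theorem_of_calculus_interior_strong[OF assms(2,1) _ cont] f' by simp
  moreover have "norm (f' t) \<le> B" if "t \<in> cbox a b - (T \<union> {a, b})" for t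
    using f' that by auto
  ultimately show ?thesis
    using has_integral_bound_spike_finite[of B "T \<union> {a, b}" f' "f b - f a" a b] assms(1-3)
    by simp
qed

section \<open>Orbits and max filtering\<close>

lemma finite_orth_groupD:
  assumes "finite_orth_group G"
  shows "finite G" "mat 1 \<in> G" "g \<in> G \<Longrightarrow> orthogonal_matrix g"
    "g \<in> G \<Longrightarrow> h \<in> G \<Longrightarrow> g ** h \<in> G" "g \<in> G \<Longrightarrow> matrix_inv g \<in> G"
  using assms unfolding finite_orth_group_def by auto

lemma orbit_self: "finite_orth_group G \<Longrightarrow> x \<in> orbit G x"
  using finite_orth_groupD(2) by (force simp: orbit_def)

lemma finite_orbit: "finite_orth_group G \<Longrightarrow> finite (orbit G x)"
  by (simp add: orbit_def finite_orth_groupD(1))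

lemma orbit_matrix_mult:
  assumes G: "finite_orth_group G" and k: "k \<in> G"
  shows "orbit G (k *v x) = orbit G x"
proof
  show "orbit G (k *v x) \<subseteq> orbit G x"
    using finite_orth_groupD(4)[OF G _ k] by (auto simp: orbit_def matrix_vector_mul_assoc)
  show "orbit G x \<subseteq> orbit G (k *v x)"
  proof
    fix p assume "p \<in> orbit G x"
    then obtain h where h: "h \<in> G" "p = h *v x" by (auto simp: orbit_def)
    have k_inv: "matrix_inv k ** k = mat 1"
      using finite_orth_groupD(3)[OF G k]
      by (simp add: matrix_inv_orthogonal orthogonal_matrix_def)
    have "p = (h ** matrix_inv k) *v (k *v x)"
      using h k_inv by (simp add: matrix_vector_mul_assoc flip: matrix_mul_assoc)
    moreover have "h ** matrix_inv k \<in> G"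
      using finite_orth_groupD(4,5)[OF G] h k by blast
    ultimately show "p \<in> orbit G (k *v x)" by (auto simp: orbit_def)
  qed
qed

lemma orbit_eq_iff:
  assumes G: "finite_orth_group G"
  shows "orbit G x = orbit G y \<longleftrightarrow> y \<in> orbit G x"
proof
  assume "y \<in> orbit G x"
  then obtain k where "k \<in> G" "y = k *v x" by (auto simp: orbit_def)
  then show "orbit G x = orbit G y" using orbit_matrix_mult[OF G] by simp
qed (use orbit_self[OF G, of y] in simp)

lemma inner_orbit_orbit:
  assumes G: "finite_orth_group G" and p: "p \<in> orbit G z" and q: "q \<in> orbit G x"
  shows "\<exists>p'\<in>orbit G z. p \<bullet> q = p' \<bullet> x"
proof -
  obtain a b where ab: "a \<in> G" "b \<in> G" "p = a *v z" "q = b *v x"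
    using p q by (auto simp: orbit_def)
  have "p \<bullet> q = x \<bullet> (transpose b *v p)"
    using ab(4) by (metis inner_commute inner_matrix_vector_mult)
  also have "\<dots> = ((matrix_inv b ** a) *v z) \<bullet> x"
    using ab(3) matrix_inv_orthogonal[OF finite_orth_groupD(3)[OF G ab(2)]]
    by (metis inner_commute matrix_vector_mul_assoc)
  finally have "p \<bullet> q = ((matrix_inv b ** a) *v z) \<bullet> x" .
  moreover have "(matrix_inv b ** a) *v z \<in> orbit G z"
    using finite_orth_groupD(4,5)[OF G] ab by (auto simp: orbit_def)
  ultimately show ?thesis by blast
qed

lemma maxfilt_eq_Max:
  assumes G: "finite_orth_group G"
  shows "maxfilt G z x = Max ((\<lambda>p. p \<bullet> x) ` orbit G z)"
proof -
  have "{p \<bullet> q | p q. p \<in> orbit G z \<and> q \<in> orbit G x} = (\<lambda>p. p \<bullet> x) ` orbit G z"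
    using orbit_self[OF G, of x] inner_orbit_orbit[OF G] by blast
  then show ?thesis unfolding maxfilt_def by simp
qed

lemma maxfilt_lipschitz:
  assumes G: "finite_orth_group G"
  shows "\<bar>maxfilt G z x - maxfilt G z y\<bar> \<le> norm z * norm (x - y)"
proof -
  have one_sided: "maxfilt G z x - maxfilt G z y \<le> norm z * norm (x - y)" for x y
  proof -
    have fin: "finite ((\<lambda>p. p \<bullet> w) ` orbit G z)" for w
      using finite_orbit[OF G] by simp
    obtain p where p: "p \<in> orbit G z" "maxfilt G z x = p \<bullet> x"
      using Max_in[OF fin] orbit_self[OF G, of z] maxfilt_eq_Max[OF G] by fastforce
    have "p \<bullet> y \<le> maxfilt G z y"
      using Max_ge[OF fin] p(1) maxfilt_eq_Max[OF G] by simp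
    moreover have "norm p = norm z"
      using p(1) finite_orth_groupD(3)[OF G] norm_orthogonal_matrix_mult
      by (auto simp: orbit_def)
    moreover have "p \<bullet> (x - y) \<le> norm p * norm (x - y)"
      by (rule norm_cauchy_schwarz)
    ultimately show ?thesis using p(2) by (simp add: inner_diff_right)
  qed
  show ?thesis
    using one_sided[of x y] one_sided[of y x] by (simp add: norm_minus_commute abs_le_iff)
qed

lemma lipschitz_on_maxfilter_bank:
  assumes G: "finite_orth_group G"
  shows "(\<Sum>i\<in>UNIV. norm (z i))-lipschitz_on S (maxfilter_bank G z)"
proof (rule lipschitz_onI)
  fix x y
  have "dist (maxfilter_bank G z x) (maxfilter_bank G z y)
      \<le> (\<Sum>i\<in>UNIV. \<bar>(maxfilter_bank G z x - maxfilter_bank G z y) $ i\<bar>)"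
    unfolding dist_norm by (rule norm_le_l1_cart)
  also have "\<dots> \<le> (\<Sum>i\<in>UNIV. norm (z i) * norm (x - y))"
    by (rule sum_mono) (simp add: maxfilter_bank_def maxfilt_lipschitz[OF G])
  finally show "dist (maxfilter_bank G z x) (maxfilter_bank G z y)
      \<le> (\<Sum>i\<in>UNIV. norm (z i)) * dist x y"
    by (simp add: dist_norm sum_distrib_right)
qed (simp add: sum_nonneg)

lemma continuous_on_maxfilter_bank:
  "finite_orth_group G \<Longrightarrow> continuous_on S (maxfilter_bank G z)"
  using lipschitz_on_maxfilter_bank by (rule lipschitz_on_continuous_on)

lemma maxfilter_bank_matrix_mult:
  "finite_orth_group G \<Longrightarrow> k \<in> G \<Longrightarrow> maxfilter_bank G z (k *v x) = maxfilter_bank G z x"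
  by (simp add: maxfilter_bank_def maxfilt_def orbit_matrix_mult)

lemma open_voronoi:
  assumes G: "finite_orth_group G"
  shows "open (voronoi G w)"
proof -
  have "voronoi G w = (\<Inter>p\<in>orbit G w - {w}. {y. p \<bullet> y < w \<bullet> y})"
    unfolding voronoi_def by auto
  then show ?thesis
    using finite_orbit[OF G]
    by (auto intro!: open_INT open_Collect_less continuous_intros)
qed

lemma maxfilt_on_voronoi:
  assumes G: "finite_orth_group G" and g: "g \<in> G" and y: "y \<in> voronoi G (g *v z)"
  shows "maxfilt G z y = (g *v z) \<bullet> y"
proof -
  have fin: "finite ((\<lambda>p. p \<bullet> y) ` orbit G z)"
    using finite_orbit[OF G] by simp
  have gz: "g *v z \<in> orbit G z"
    using g by (auto simp: orbit_def)
  have le: "p \<bullet> y \<le> (g *v z) \<bullet> y" if "p \<in> orbit G z" for p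
    using y that orbit_matrix_mult[OF G g] unfolding voronoi_def
    by (cases "p = g *v z") (auto intro: less_imp_le)
  show ?thesis
    unfolding maxfilt_eq_Max[OF G] using fin gz le by (intro Max_eqI) auto
qed

section \<open>Common Voronoi regions\<close>

definition common_voronoi ::
    "(real^'d^'d) set \<Rightarrow> ('n \<Rightarrow> real^'d) \<Rightarrow> ('n \<Rightarrow> real^'d^'d) \<Rightarrow> (real^'d) set" where
  "common_voronoi G z g = (\<Inter>i. voronoi G (g i *v z i))"

definition compatible_choices ::
    "(real^'d^'d) set \<Rightarrow> ('n \<Rightarrow> real^'d) \<Rightarrow> ('n \<Rightarrow> real^'d^'d) set" where
  "compatible_choices G z = {g. (\<forall>i. g i \<in> G) \<and> common_voronoi G z g \<noteq> {}}"

definition maxfilter_lip_bound :: "(real^'d^'d) set \<Rightarrow> ('n::finite \<Rightarrow> real^'d) \<Rightarrow> real" where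
  "maxfilter_lip_bound G z =
     Max ((\<lambda>g. onorm (\<lambda>v. col_matrix (\<lambda>i. g i *v z i) *v v)) ` compatible_choices G z)"

lemma open_common_voronoi:
  fixes z :: "'n::finite \<Rightarrow> real^'d"
  shows "finite_orth_group G \<Longrightarrow> open (common_voronoi G z g)"
  unfolding common_voronoi_def by (auto intro: open_INT open_voronoi)

lemma maxfilter_bank_on_common_voronoi:
  assumes G: "finite_orth_group G" and g: "\<forall>i. g i \<in> G" and x: "x \<in> common_voronoi G z g"
  shows "maxfilter_bank G z x = (\<chi> i. g i *v z i) *v x"
  using maxfilt_on_voronoi[OF G] g x
  by (auto simp: maxfilter_bank_def common_voronoi_def vec_eq_iff matrix_vector_mult_def
      inner_vec_def mult.commute)

lemma transpose_col_matrix: "transpose (col_matrix c) = (\<chi> i. c i)"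
  by (simp add: col_matrix_def transpose_def)

lemma onorm_rows_eq_onorm_col_matrix:
  "onorm (\<lambda>v. (\<chi> i. c i) *v v) = onorm (\<lambda>v. col_matrix c *v v)"
  by (metis onorm_transpose transpose_col_matrix)

lemma finite_compatible_choices:
  fixes z :: "'n::finite \<Rightarrow> real^'d"
  assumes G: "finite_orth_group G"
  shows "finite (compatible_choices G z)"
proof (rule finite_subset)
  show "compatible_choices G z \<subseteq> Pi\<^sub>E UNIV (\<lambda>_. G)"
    by (auto simp: compatible_choices_def PiE_UNIV_domain)
  show "finite (Pi\<^sub>E (UNIV :: 'n set) (\<lambda>_. G))"
    using finite_orth_groupD(1)[OF G] by (simp add: finite_PiE)
qed

definition orbit_differences :: "(real^'d^'d) set \<Rightarrow> ('n \<Rightarrow> real^'d) \<Rightarrow> (real^'d) set" where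
  "orbit_differences G z = {p - q | p q i. p \<in> orbit G (z i) \<and> q \<in> orbit G (z i) \<and> p \<noteq> q}"

definition tie_hyperplanes :: "(real^'d^'d) set \<Rightarrow> ('n \<Rightarrow> real^'d) \<Rightarrow> (real^'d) set" where
  "tie_hyperplanes G z = {x. \<exists>a\<in>orbit_differences G z. a \<bullet> x = 0}"

lemma finite_orbit_differences:
  fixes z :: "'n::finite \<Rightarrow> real^'d"
  assumes G: "finite_orth_group G"
  shows "finite (orbit_differences G z)"
proof (rule finite_subset)
  show "orbit_differences G z \<subseteq> (\<Union>i. (\<lambda>(p, q). p - q) ` (orbit G (z i) \<times> orbit G (z i)))"
    unfolding orbit_differences_def by blast
qed (simp add: finite_orbit[OF G])

lemma negligible_tie_hyperplanes:
  fixes z :: "'n::finite \<Rightarrow> real^'d"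
  assumes G: "finite_orth_group G"
  shows "negligible (tie_hyperplanes G z)"
proof -
  have "tie_hyperplanes G z = (\<Union>a\<in>orbit_differences G z. {x. a \<bullet> x = 0})"
    unfolding tie_hyperplanes_def by blast
  moreover have "0 \<notin> orbit_differences G z"
    unfolding orbit_differences_def by auto
  ultimately show ?thesis
    using finite_orbit_differences[OF G]
    by (auto intro!: negligible_Union negligible_hyperplane)
qed

lemma common_voronoi_off_tie_hyperplanes:
  fixes z :: "'n::finite \<Rightarrow> real^'d"
  assumes G: "finite_orth_group G" and x: "x \<notin> tie_hyperplanes G z"
  obtains g where "\<forall>i. g i \<in> G" "x \<in> common_voronoi G z g"
proof -
  have "\<exists>h\<in>G. x \<in> voronoi G (h *v z i)" for i
  proof -
    have fin: "finite ((\<lambda>p. p \<bullet> x) ` orbit G (z i))"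
      using finite_orbit[OF G] by simp
    obtain p where p: "p \<in> orbit G (z i)" "p \<bullet> x = Max ((\<lambda>p. p \<bullet> x) ` orbit G (z i))"
      using Max_in[OF fin] orbit_self[OF G, of "z i"] by fastforce
    then obtain h where h: "h \<in> G" "p = h *v z i"
      by (auto simp: orbit_def)
    have "q \<bullet> x < p \<bullet> x" if "q \<in> orbit G p" "q \<noteq> p" for q
    proof -
      have q: "q \<in> orbit G (z i)"
        using that(1) orbit_matrix_mult[OF G h(1)] h(2) by simp
      then have "q \<bullet> x \<le> p \<bullet> x"
        using p(2) fin by simp
      moreover have "(p - q) \<bullet> x \<noteq> 0"
        using x p(1) q that(2) unfolding tie_hyperplanes_def orbit_differences_def by blast
      ultimately show ?thesis by (simp add: inner_diff_left)
    qed
    then show ?thesis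
      using h unfolding voronoi_def by blast
  qed
  then obtain g where "\<forall>i. g i \<in> G \<and> x \<in> voronoi G (g i *v z i)"
    by metis
  then show ?thesis
    using that unfolding common_voronoi_def by blast
qed

lemma compatible_choices_nonempty:
  fixes z :: "'n::finite \<Rightarrow> real^'d"
  assumes G: "finite_orth_group G"
  shows "compatible_choices G z \<noteq> {}"
proof -
  have "- tie_hyperplanes G z \<noteq> {}"
    using closure_complement_negligible[OF negligible_tie_hyperplanes[OF G, of z]] by auto
  then obtain x where "x \<notin> tie_hyperplanes G z" by blast
  then show ?thesis
    using common_voronoi_off_tie_hyperplanes[OF G] unfolding compatible_choices_def by blast
qed

lemma onorm_le_maxfilter_lip_bound:
  fixes z :: "'n::finite \<Rightarrow> real^'d"
  assumes G: "finite_orth_group G" and g: "g \<in> compatible_choices G z"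
  shows "onorm (\<lambda>v. col_matrix (\<lambda>i. g i *v z i) *v v) \<le> maxfilter_lip_bound G z"
  unfolding maxfilter_lip_bound_def
  using finite_compatible_choices[OF G] g by (intro Max_ge finite_imageI imageI)

lemma maxfilter_lip_bound_nonneg:
  fixes z :: "'n::finite \<Rightarrow> real^'d"
  assumes G: "finite_orth_group G"
  shows "0 \<le> maxfilter_lip_bound G z"
proof -
  obtain g where g: "g \<in> compatible_choices G z"
    using compatible_choices_nonempty[OF G] by blast
  have "0 \<le> onorm (\<lambda>v. col_matrix (\<lambda>i. g i *v z i) *v v)"
    by (simp add: onorm_pos_le)
  also have "\<dots> \<le> maxfilter_lip_bound G z"
    by (rule onorm_le_maxfilter_lip_bound[OF G g])
  finally show ?thesis .
qed

lemma norm_rows_le_maxfilter_lip_bound: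
  fixes z :: "'n::finite \<Rightarrow> real^'d"
  assumes G: "finite_orth_group G" and g: "g \<in> compatible_choices G z"
  shows "norm ((\<chi> i. g i *v z i) *v v) \<le> maxfilter_lip_bound G z * norm v"
proof -
  have "norm ((\<chi> i. g i *v z i) *v v) \<le> onorm (\<lambda>v. (\<chi> i. g i *v z i) *v v) * norm v"
    by (simp add: onorm)
  also have "onorm (\<lambda>v. (\<chi> i. g i *v z i) *v v) \<le> maxfilter_lip_bound G z"
    unfolding onorm_rows_eq_onorm_col_matrix by (rule onorm_le_maxfilter_lip_bound[OF G g])
  finally show ?thesis
    by (simp add: mult_right_mono)
qed

section \<open>The upper bound\<close>

lemma maxfilter_bank_has_vector_derivative_on_line:
  fixes z :: "'n::finite \<Rightarrow> real^'d"
  assumes G: "finite_orth_group G" and g: "\<forall>i. g i \<in> G"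
    and t: "x + t *\<^sub>R v \<in> common_voronoi G z g"
  shows "((\<lambda>s. maxfilter_bank G z (x + s *\<^sub>R v)) has_vector_derivative (\<chi> i. g i *v z i) *v v)
      (at t)"
proof -
  let ?M = "\<chi> i. g i *v z i"
  let ?U = "(\<lambda>s. x + s *\<^sub>R v) -` common_voronoi G z g"
  have "((\<lambda>s. ?M *v x + s *\<^sub>R (?M *v v)) has_vector_derivative ?M *v v) (at t)"
    by (auto intro!: derivative_eq_intros)
  then show ?thesis
  proof (rule has_vector_derivative_transform_within_open)
    show "open ?U"
      by (intro continuous_open_vimage open_common_voronoi[OF G] continuous_intros)
  qed (use t in \<open>simp_all add: maxfilter_bank_on_common_voronoi[OF G g]
        matrix_vector_right_distrib matrix_vector_mult_scaleR\<close>)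
qed

lemma maxfilter_bank_lipschitz_off_tie_hyperplanes:
  fixes z :: "'n::finite \<Rightarrow> real^'d"
  assumes G: "finite_orth_group G"
    and x: "x \<notin> tie_hyperplanes G z" and y: "y \<notin> tie_hyperplanes G z"
  shows "norm (maxfilter_bank G z y - maxfilter_bank G z x)
      \<le> maxfilter_lip_bound G z * norm (y - x)"
proof -
  let ?L = "maxfilter_lip_bound G z"
  let ?\<gamma> = "\<lambda>t. x + t *\<^sub>R (y - x)"
  let ?T = "{t. ?\<gamma> t \<in> tie_hyperplanes G z}"
  have "finite ?T"
    using finite_line_hyperplane_hits[OF finite_orbit_differences[OF G], where x = x and v = "y - x"] x
    by (simp add: tie_hyperplanes_def)
  moreover have "continuous_on {0..1} (\<lambda>t. maxfilter_bank G z (?\<gamma> t))"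
    by (intro continuous_on_compose2[OF continuous_on_maxfilter_bank[OF G]] continuous_intros)
      auto
  moreover have "\<exists>D. ((\<lambda>t. maxfilter_bank G z (?\<gamma> t)) has_vector_derivative D) (at t)
      \<and> norm D \<le> ?L * norm (y - x)" if t: "t \<in> {0<..<1} - ?T" for t
  proof -
    obtain g where g: "\<forall>i. g i \<in> G" "?\<gamma> t \<in> common_voronoi G z g"
      using common_voronoi_off_tie_hyperplanes[OF G] t by blast
    then have "g \<in> compatible_choices G z"
      by (auto simp: compatible_choices_def)
    then show ?thesis
      using maxfilter_bank_has_vector_derivative_on_line[OF G g] norm_rows_le_maxfilter_lip_bound[OF G]
      by blast
  qed
  ultimately have "norm (maxfilter_bank G z (?\<gamma> 1) - maxfilter_bank G z (?\<gamma> 0))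
      \<le> ?L * norm (y - x) * (1 - 0)"
    using maxfilter_lip_bound_nonneg[OF G, of z]
    by (intro norm_diff_le_of_vector_derivative_bound_off_finite) auto
  then show ?thesis by simp
qed

lemma maxfilter_bank_lipschitz:
  fixes z :: "'n::finite \<Rightarrow> real^'d"
  assumes G: "finite_orth_group G"
  shows "norm (maxfilter_bank G z y - maxfilter_bank G z x)
      \<le> maxfilter_lip_bound G z * norm (y - x)"
proof -
  let ?N = "tie_hyperplanes G z"
  define F where "F = (\<lambda>w. norm (maxfilter_bank G z (snd w) - maxfilter_bank G z (fst w))
      - maxfilter_lip_bound G z * norm (snd w - fst w))"
  have cont_bank: "continuous_on UNIV (\<lambda>w. maxfilter_bank G z (f w))"
    if "continuous_on UNIV f" for f :: "(real^'d) \<times> (real^'d) \<Rightarrow> real^'d"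
    using continuous_on_compose[OF that continuous_on_maxfilter_bank[OF G]] by (simp add: o_def)
  have "continuous_on UNIV F"
    unfolding F_def by (intro continuous_intros cont_bank)
  moreover have "closure ((- ?N) \<times> (- ?N)) = UNIV"
    using closure_complement_negligible[OF negligible_tie_hyperplanes[OF G, of z]]
    by (simp add: closure_Times)
  moreover have "F w \<le> 0" if "w \<in> (- ?N) \<times> (- ?N)" for w
    using maxfilter_bank_lipschitz_off_tie_hyperplanes[OF G] that by (auto simp: F_def)
  ultimately have "F (x, y) \<le> 0"
    using continuous_le_on_closure[of "(- ?N) \<times> (- ?N)" F "(x, y)" 0] by simp
  then show ?thesis by (simp add: F_def)
qed

lemma qdist_eq_Min:
  "qdist G x y = Min ((\<lambda>(p, q). dist p q) ` (orbit G x \<times> orbit G y))"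
  unfolding qdist_def by (rule arg_cong[where f = Min]) auto

lemma qdist_attained:
  assumes G: "finite_orth_group G"
  obtains p q where "p \<in> orbit G x" "q \<in> orbit G y" "qdist G x y = dist p q"
proof -
  have "qdist G x y \<in> (\<lambda>(p, q). dist p q) ` (orbit G x \<times> orbit G y)"
    unfolding qdist_eq_Min
    using finite_orbit[OF G] orbit_self[OF G, of x] orbit_self[OF G, of y]
    by (intro Min_in) auto
  then show ?thesis using that by auto
qed

lemma qdist_le_dist:
  "finite_orth_group G \<Longrightarrow> qdist G x y \<le> dist x y"
  unfolding qdist_eq_Min
  by (rule Min_le) (auto simp: finite_orbit orbit_self)

lemma qdist_pos:
  assumes G: "finite_orth_group G" and "orbit G x \<noteq> orbit G y"
  shows "0 < qdist G x y"
proof -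
  obtain p q where pq: "p \<in> orbit G x" "q \<in> orbit G y" "qdist G x y = dist p q"
    using qdist_attained[OF G] .
  have "p \<noteq> q"
    using pq(1,2) assms(2) orbit_eq_iff[OF G] by metis
  then show ?thesis
    using pq(3) by simp
qed

lemma maxfilter_bank_qdist_lipschitz:
  fixes z :: "'n::finite \<Rightarrow> real^'d"
  assumes G: "finite_orth_group G"
  shows "norm (maxfilter_bank G z x - maxfilter_bank G z y)
      \<le> maxfilter_lip_bound G z * qdist G x y"
proof -
  obtain p q where pq: "p \<in> orbit G x" "q \<in> orbit G y" "qdist G x y = dist p q"
    using qdist_attained[OF G] .
  then obtain a b where "a \<in> G" "b \<in> G" "p = a *v x" "q = b *v y"
    by (auto simp: orbit_def)
  then have "maxfilter_bank G z x = maxfilter_bank G z p" "maxfilter_bank G z y = maxfilter_bank G z q"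
    by (simp_all add: maxfilter_bank_matrix_mult[OF G])
  then show ?thesis
    using maxfilter_bank_lipschitz[OF G, of z p q] pq(3) by (simp add: dist_norm)
qed

lemma maxfilter_bank_ratio_le:
  fixes z :: "'n::finite \<Rightarrow> real^'d"
  assumes G: "finite_orth_group G"
  shows "norm (maxfilter_bank G z x - maxfilter_bank G z y) / qdist G x y
      \<le> maxfilter_lip_bound G z"
proof (cases "qdist G x y = 0")
  case True
  then show ?thesis
    using maxfilter_lip_bound_nonneg[OF G] by simp
next
  case False
  moreover obtain p q where "p \<in> orbit G x" "q \<in> orbit G y" "qdist G x y = dist p q"
    by (rule qdist_attained[OF G])
  then have "0 \<le> qdist G x y"
    by simp
  ultimately show ?thesis
    using maxfilter_bank_qdist_lipschitz[OF G] by (simp add: pos_divide_le_eq)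
qed

section \<open>Sharpness\<close>

lemma small_step_off_orbit:
  assumes G: "finite_orth_group G" and U: "open U" "x \<in> U" and "h \<noteq> 0"
  obtains s where "0 < s" "x + s *\<^sub>R h \<in> U" "orbit G x \<noteq> orbit G (x + s *\<^sub>R h)"
proof -
  obtain r where r: "r > 0" "ball x r \<subseteq> U"
    using U open_contains_ball by blast
  obtain \<delta> where \<delta>: "\<delta> > 0" "\<forall>p\<in>orbit G x. p \<noteq> x \<longrightarrow> \<delta> \<le> dist x p"
    using finite_set_avoid[OF finite_orbit[OF G]] by blast
  define s where "s = min r \<delta> / (2 * norm h)"
  have s: "0 < s" "s * norm h < r" "s * norm h < \<delta>"
    using r \<delta> \<open>h \<noteq> 0\<close> by (auto simp: s_def)
  have dist: "dist x (x + s *\<^sub>R h) = s * norm h"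
    using s(1) by (simp add: dist_norm)
  have "x + s *\<^sub>R h \<noteq> x"
    using s(1) \<open>h \<noteq> 0\<close> by simp
  then have "x + s *\<^sub>R h \<notin> orbit G x"
    using \<delta>(2) s(3) dist by auto
  moreover have "x + s *\<^sub>R h \<in> U"
    using r(2) s(2) dist by auto
  ultimately show ?thesis
    using that s(1) orbit_eq_iff[OF G] by blast
qed

lemma maxfilter_bank_ratio_gt:
  fixes z :: "'n::finite \<Rightarrow> real^'d"
  assumes G: "finite_orth_group G" and b: "b < maxfilter_lip_bound G z"
  obtains x y where "orbit G x \<noteq> orbit G y"
    "b < norm (maxfilter_bank G z x - maxfilter_bank G z y) / qdist G x y"
proof -
  let ?\<Phi> = "maxfilter_bank G z"
  have "maxfilter_lip_bound G z
      \<in> (\<lambda>g. onorm (\<lambda>v. col_matrix (\<lambda>i. g i *v z i) *v v)) ` compatible_choices G z"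
    unfolding maxfilter_lip_bound_def
    using finite_compatible_choices[OF G] compatible_choices_nonempty[OF G] by (intro Max_in) auto
  then obtain g where g: "\<forall>i. g i \<in> G" "common_voronoi G z g \<noteq> {}"
    and Lg: "maxfilter_lip_bound G z = onorm (\<lambda>v. col_matrix (\<lambda>i. g i *v z i) *v v)"
    by (auto simp: compatible_choices_def)
  define M where "M = (\<chi> i. g i *v z i)"
  have "b < onorm (\<lambda>v. M *v v)"
    using b Lg by (simp add: M_def onorm_rows_eq_onorm_col_matrix)
  then obtain h where h: "b * norm h < norm (M *v h)"
    by (rule exists_norm_gt_of_less_onorm)
  then have "h \<noteq> 0" by auto
  obtain x where x: "x \<in> common_voronoi G z g"
    using g(2) by blast
  obtain s where s: "0 < s" "x + s *\<^sub>R h \<in> common_voronoi G z g"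
    and orbits: "orbit G x \<noteq> orbit G (x + s *\<^sub>R h)"
    using small_step_off_orbit[OF G open_common_voronoi[OF G] x \<open>h \<noteq> 0\<close>] .
  define y where "y = x + s *\<^sub>R h"
  have "?\<Phi> x = M *v x" "?\<Phi> y = M *v y"
    using maxfilter_bank_on_common_voronoi[OF G g(1)] x s(2) by (simp_all add: M_def y_def)
  then have "norm (?\<Phi> x - ?\<Phi> y) = s * norm (M *v h)"
    using s(1) by (simp add: y_def matrix_vector_right_distrib matrix_vector_mult_scaleR)
  moreover have "dist x y = s * norm h"
    using s(1) by (simp add: y_def dist_norm)
  ultimately have "b < norm (?\<Phi> x - ?\<Phi> y) / dist x y"
    using h \<open>h \<noteq> 0\<close> s(1) by (simp add: pos_less_divide_eq)
  also have "\<dots> \<le> norm (?\<Phi> x - ?\<Phi> y) / qdist G x y"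
    using qdist_le_dist[OF G, of x y] qdist_pos[OF G orbits[folded y_def]]
    by (intro divide_left_mono mult_pos_pos) auto
  finally show ?thesis
    using that orbits[folded y_def] by blast
qed

theorem theorem14:
  fixes G :: "(real^'d^'d) set" and z :: "'n::finite \<Rightarrow> real^'d"
  assumes "finite_orth_group G"
  shows "Sup {norm (maxfilter_bank G z x - maxfilter_bank G z y) / qdist G x y
              | x y. orbit G x \<noteq> orbit G y}
       = Max {onorm (\<lambda>v. col_matrix (\<lambda>i. g i *v z i) *v v)
              | g. (\<forall>i. g i \<in> G) \<and> (\<Inter>i. voronoi G (g i *v z i)) \<noteq> {}}"
proof -
  let ?S = "{norm (maxfilter_bank G z x - maxfilter_bank G z y) / qdist G x y
              | x y. orbit G x \<noteq> orbit G y}"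
  have "{onorm (\<lambda>v. col_matrix (\<lambda>i. g i *v z i) *v v)
              | g. (\<forall>i. g i \<in> G) \<and> (\<Inter>i. voronoi G (g i *v z i)) \<noteq> {}}
      = (\<lambda>g. onorm (\<lambda>v. col_matrix (\<lambda>i. g i *v z i) *v v)) ` compatible_choices G z"
    by (auto simp: compatible_choices_def common_voronoi_def)
  moreover have "Sup ?S = maxfilter_lip_bound G z"
  proof (rule cSup_eq)
    show "s \<le> maxfilter_lip_bound G z" if "s \<in> ?S" for s
      using that maxfilter_bank_ratio_le[OF assms] by auto
    show "maxfilter_lip_bound G z \<le> u" if "\<And>s. s \<in> ?S \<Longrightarrow> s \<le> u" for u
    proof (rule ccontr)
      assume "\<not> maxfilter_lip_bound G z \<le> u"
      then obtain x y where "orbit G x \<noteq> orbit G y"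
          "u < norm (maxfilter_bank G z x - maxfilter_bank G z y) / qdist G x y"
        using maxfilter_bank_ratio_gt[OF assms] by (meson not_le)
      then show False
        using that by fastforce
    qed
  qed
  ultimately show ?thesis
    by (simp add: maxfilter_lip_bound_def)
qed

end
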